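(* Let \textsc{Min-CSP} be a constraint satisfaction problem whose objective is to minimize the number of violated constraints, and let \textsc{Max-Comp-CSP} be the complementary problem of maximizing the number of satisfied constraints on the same instances. If there exists a PTAS for \textsc{Max-Comp-CSP} and a super robust algorithm for \textsc{Min-CSP}, then there exists a PTAS for \textsc{Min-CSP}.
   Context: For an instance with $C$ constraints, it is $(1-\varepsilon)$-satisfiable if some assignment satisfies at least $(1-\varepsilon)C$ constraints. A super robust algorithm for \textsc{Min-CSP} is a polynomial-time algorithm whose running time does not depend on $\varepsilon$ and which, on every $(1-\varepsilon)$-satisfiable instance with $C$ constraints, outputs an assignment violating at most $(\varepsilon+O(\varepsilon^2))C$ constraints (the constant in $O(\varepsilon^2)$ being independent of the instance). A PTAS for a minimization (resp. maximization) problem is a family of polynomial-time algorithms that, for every fixed $\tau>0$, output a solution of value at most $(1+\tau)$ (resp. at least $(1-\tau)$) times the optimum. *)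

theory Defs
  imports Complex_Main
begin

(* A CSP is given abstractly: every instance I :: 'i has a list of constraints
   cons I (each a predicate on assignments; repetitions allowed) and a set of
   admissible assignments Asg I.
   Poly is the class of polynomial-time algorithms. *)

definition nviol :: "('i \<Rightarrow> ('a \<Rightarrow> bool) list) \<Rightarrow> 'i \<Rightarrow> 'a \<Rightarrow> nat" where
  "nviol cons I x = length (filter (\<lambda>c. \<not> c x) (cons I))"

definition nsat :: "('i \<Rightarrow> ('a \<Rightarrow> bool) list) \<Rightarrow> 'i \<Rightarrow> 'a \<Rightarrow> nat" where
  "nsat cons I x = length (filter (\<lambda>c. c x) (cons I))"

definition ncons :: "('i \<Rightarrow> ('a \<Rightarrow> bool) list) \<Rightarrow> 'i \<Rightarrow> nat" where
  "ncons cons I = length (cons I)"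

definition min_opt :: "('i \<Rightarrow> ('a \<Rightarrow> bool) list) \<Rightarrow> ('i \<Rightarrow> 'a set) \<Rightarrow> 'i \<Rightarrow> nat" where
  "min_opt cons Asg I = Min (nviol cons I ` Asg I)"

definition max_opt :: "('i \<Rightarrow> ('a \<Rightarrow> bool) list) \<Rightarrow> ('i \<Rightarrow> 'a set) \<Rightarrow> 'i \<Rightarrow> nat" where
  "max_opt cons Asg I = Max (nsat cons I ` Asg I)"

definition eps_satisfiable ::
  "('i \<Rightarrow> ('a \<Rightarrow> bool) list) \<Rightarrow> ('i \<Rightarrow> 'a set) \<Rightarrow> 'i \<Rightarrow> real \<Rightarrow> bool" where
  "eps_satisfiable cons Asg I \<epsilon> \<longleftrightarrow>
     (\<exists>x\<in>Asg I. real (nsat cons I x) \<ge> (1 - \<epsilon>) * real (ncons cons I))"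

definition super_robust ::
  "('i \<Rightarrow> ('a \<Rightarrow> bool) list) \<Rightarrow> ('i \<Rightarrow> 'a set) \<Rightarrow> ('i \<Rightarrow> 'a) set \<Rightarrow> ('i \<Rightarrow> 'a) \<Rightarrow> bool" where
  "super_robust cons Asg Poly A \<longleftrightarrow>
     A \<in> Poly \<and> (\<forall>I. A I \<in> Asg I) \<and>
     (\<exists>K::real. K \<ge> 0 \<and> (\<forall>I \<epsilon>. eps_satisfiable cons Asg I \<epsilon> \<longrightarrow>
        real (nviol cons I (A I)) \<le> (\<epsilon> + K * \<epsilon>\<^sup>2) * real (ncons cons I)))"

definition ptas_min ::
  "('i \<Rightarrow> ('a \<Rightarrow> bool) list) \<Rightarrow> ('i \<Rightarrow> 'a set) \<Rightarrow> ('i \<Rightarrow> 'a) set \<Rightarrow> bool" where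
  "ptas_min cons Asg Poly \<longleftrightarrow>
     (\<forall>\<tau>::real. \<tau> > 0 \<longrightarrow> (\<exists>A\<in>Poly. \<forall>I. A I \<in> Asg I \<and>
        real (nviol cons I (A I)) \<le> (1 + \<tau>) * real (min_opt cons Asg I)))"

definition ptas_max ::
  "('i \<Rightarrow> ('a \<Rightarrow> bool) list) \<Rightarrow> ('i \<Rightarrow> 'a set) \<Rightarrow> ('i \<Rightarrow> 'a) set \<Rightarrow> bool" where
  "ptas_max cons Asg Poly \<longleftrightarrow>
     (\<forall>\<tau>::real. \<tau> > 0 \<longrightarrow> (\<exists>A\<in>Poly. \<forall>I. A I \<in> Asg I \<and>
        real (nsat cons I (A I)) \<ge> (1 - \<tau>) * real (max_opt cons Asg I)))"

definition better_of ::
  "('i \<Rightarrow> ('a \<Rightarrow> bool) list) \<Rightarrow> ('i \<Rightarrow> 'a) \<Rightarrow> ('i \<Rightarrow> 'a) \<Rightarrow> 'i \<Rightarrow> 'a" where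
  "better_of cons A B = (\<lambda>I. if nviol cons I (A I) \<le> nviol cons I (B I) then A I else B I)"

end

theory Submission
  imports Defs
begin

(* Let C be the number of constraints, m the minimum number of violated ones, and K the
   constant of the super robust algorithm R.  Run R together with the Max-Comp-CSP PTAS B at
   accuracy \<delta> = \<tau>^2/(K+1) and keep the better assignment.  The instance is
   (1 - m/C)-satisfiable, so R violates at most m + K m^2/C constraints, which is at most
   (1+\<tau>) m when m \<le> \<tau> C/(K+1).  Since the min and max optima add up to C, B violates at most
   m + \<delta> C constraints, and \<delta> C \<le> \<tau> m in the complementary case m \<ge> \<tau> C/(K+1). *)

lemma nviol_add_nsat: "nviol cons I x + nsat cons I x = ncons cons I"
  unfolding nviol_def nsat_def ncons_def
  using sum_length_filter_compl[of "\<lambda>c. c x" "cons I"] by simp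

lemma nviol_better_of:
  "nviol cons I (better_of cons A B I) = min (nviol cons I (A I)) (nviol cons I (B I))"
  unfolding better_of_def by simp

lemma min_opt_attained:
  assumes "finite (Asg I)" "Asg I \<noteq> {}"
  obtains x where "x \<in> Asg I" "nviol cons I x = min_opt cons Asg I"
proof -
  have "min_opt cons Asg I \<in> nviol cons I ` Asg I"
    unfolding min_opt_def using assms by (intro Min_in) auto
  then obtain x where "x \<in> Asg I" "min_opt cons Asg I = nviol cons I x"
    by (rule imageE)
  then show ?thesis
    by (intro that) simp_all
qed

lemma max_opt_attained:
  assumes "finite (Asg I)" "Asg I \<noteq> {}"
  obtains x where "x \<in> Asg I" "nsat cons I x = max_opt cons Asg I"
proof -
  have "max_opt cons Asg I \<in> nsat cons I ` Asg I"
    unfolding max_opt_def using assms by (intro Max_in) auto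
  then obtain x where "x \<in> Asg I" "max_opt cons Asg I = nsat cons I x"
    by (rule imageE)
  then show ?thesis
    by (intro that) simp_all
qed

lemma min_opt_add_max_opt:
  assumes "finite (Asg I)" "Asg I \<noteq> {}"
  shows "min_opt cons Asg I + max_opt cons Asg I = ncons cons I"
proof -
  obtain x where x: "x \<in> Asg I" "nviol cons I x = min_opt cons Asg I"
    using min_opt_attained[of Asg I cons, OF assms] .
  obtain y where y: "y \<in> Asg I" "nsat cons I y = max_opt cons Asg I"
    using max_opt_attained[of Asg I cons, OF assms] .
  have "nsat cons I x \<le> max_opt cons Asg I"
    using assms x(1) unfolding max_opt_def by simp
  moreover have "min_opt cons Asg I \<le> nviol cons I y"
    using assms y(1) unfolding min_opt_def by simp
  ultimately show ?thesis
    using x(2) y(2) nviol_add_nsat[of cons I x] nviol_add_nsat[of cons I y] by linarith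
qed

lemma eps_satisfiable_min_opt:
  assumes "finite (Asg I)" "Asg I \<noteq> {}"
  shows "eps_satisfiable cons Asg I (real (min_opt cons Asg I) / real (ncons cons I))"
proof -
  obtain x where x: "x \<in> Asg I" "nviol cons I x = min_opt cons Asg I"
    using min_opt_attained[of Asg I cons, OF assms] .
  have "nviol cons I x \<le> ncons cons I"
    using nviol_add_nsat[of cons I x] by linarith
  then have "(1 - real (nviol cons I x) / real (ncons cons I)) * real (ncons cons I)
      = real (ncons cons I) - real (nviol cons I x)"
    by (cases "ncons cons I = 0") (simp_all add: field_simps)
  also have "\<dots> = real (nsat cons I x)"
    using nviol_add_nsat[of cons I x] by (metis add_diff_cancel_left' of_nat_add)
  finally show ?thesis
    using x unfolding eps_satisfiable_def by auto
qed

lemma robust_nviol_le_min_opt: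
  assumes "finite (Asg I)" "Asg I \<noteq> {}"
    and robust: "\<And>\<epsilon>. eps_satisfiable cons Asg I \<epsilon> \<Longrightarrow>
      real (nviol cons I x) \<le> (\<epsilon> + K * \<epsilon>\<^sup>2) * real (ncons cons I)"
  shows "real (nviol cons I x)
    \<le> real (min_opt cons Asg I) + K * real (min_opt cons Asg I)^2 / real (ncons cons I)"
proof -
  define m where "m = real (min_opt cons Asg I)"
  define C where "C = real (ncons cons I)"
  have "m \<le> C"
    using min_opt_add_max_opt[of Asg I cons, OF assms(1,2)] unfolding m_def C_def
    by (metis le_add1 of_nat_le_iff)
  have "real (nviol cons I x) \<le> (m / C + K * (m / C)\<^sup>2) * C"
    using robust[OF eps_satisfiable_min_opt[of Asg I cons, OF assms(1,2)]] unfolding m_def C_def .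
  also have "\<dots> = m + K * m^2 / C"
  proof (cases "C = 0")
    case True
    then show ?thesis using \<open>m \<le> C\<close> m_def by simp
  next
    case False
    then show ?thesis by (simp add: field_simps power2_eq_square)
  qed
  finally show ?thesis unfolding m_def C_def .
qed

lemma approx_max_nviol_le_min_opt:
  assumes "finite (Asg I)" "Asg I \<noteq> {}" and "0 \<le> \<delta>"
    and approx: "(1 - \<delta>) * real (max_opt cons Asg I) \<le> real (nsat cons I x)"
  shows "real (nviol cons I x) \<le> real (min_opt cons Asg I) + \<delta> * real (ncons cons I)"
proof -
  have opt: "real (min_opt cons Asg I) + real (max_opt cons Asg I) = real (ncons cons I)"
    using min_opt_add_max_opt[of Asg I cons, OF assms(1,2)] by (metis of_nat_add)
  have "\<delta> * real (max_opt cons Asg I) \<le> \<delta> * real (ncons cons I)"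
    using opt \<open>0 \<le> \<delta>\<close> by (intro mult_left_mono) auto
  then show ?thesis
    using approx opt nviol_add_nsat[of cons I x] by (simp add: algebra_simps)
qed

lemma min_robust_approx_bound_le:
  fixes m C K \<tau> :: real
  assumes "0 \<le> m" "0 \<le> C" "0 \<le> K" "0 < \<tau>"
  shows "min (m + K * m^2 / C) (m + \<tau>^2 / (K + 1) * C) \<le> (1 + \<tau>) * m"
proof (cases "(K + 1) * m \<le> \<tau> * C")
  case True
  have "K * m \<le> \<tau> * C"
    using True \<open>0 \<le> m\<close> by (simp add: algebra_simps)
  then have "K * m / C \<le> \<tau>"
    using \<open>0 \<le> C\<close> \<open>0 < \<tau>\<close> by (cases "C = 0") (auto simp: divide_simps mult.commute)
  then have "K * m^2 / C \<le> \<tau> * m"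
    using \<open>0 \<le> m\<close> mult_right_mono[of "K * m / C" \<tau> m] by (simp add: power2_eq_square)
  then show ?thesis by (simp add: algebra_simps)
next
  case False
  have "\<tau>^2 / (K + 1) * C = \<tau> * (\<tau> * C / (K + 1))"
    by (simp add: power2_eq_square)
  also have "\<dots> \<le> \<tau> * m"
    using False \<open>0 \<le> K\<close> \<open>0 < \<tau>\<close> by (intro mult_left_mono) (simp_all add: divide_simps mult.commute)
  finally show ?thesis by (simp add: algebra_simps)
qed

lemma better_of_nviol_le_min_opt:
  assumes fin: "finite (Asg I)" "Asg I \<noteq> {}" and "0 \<le> K" "0 < \<tau>"
    and robust: "\<And>\<epsilon>. eps_satisfiable cons Asg I \<epsilon> \<Longrightarrow>
      real (nviol cons I (R I)) \<le> (\<epsilon> + K * \<epsilon>\<^sup>2) * real (ncons cons I)"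
    and approx: "(1 - \<tau>^2 / (K + 1)) * real (max_opt cons Asg I) \<le> real (nsat cons I (B I))"
  shows "real (nviol cons I (better_of cons R B I)) \<le> (1 + \<tau>) * real (min_opt cons Asg I)"
proof -
  let ?m = "real (min_opt cons Asg I)" and ?C = "real (ncons cons I)"
  have "real (nviol cons I (R I)) \<le> ?m + K * ?m^2 / ?C"
    using fin robust by (rule robust_nviol_le_min_opt)
  moreover have "real (nviol cons I (B I)) \<le> ?m + \<tau>^2 / (K + 1) * ?C"
    using fin _ approx by (rule approx_max_nviol_le_min_opt) (use \<open>0 \<le> K\<close> in simp)
  moreover have "min (?m + K * ?m^2 / ?C) (?m + \<tau>^2 / (K + 1) * ?C) \<le> (1 + \<tau>) * ?m"
    using \<open>0 \<le> K\<close> \<open>0 < \<tau>\<close> by (intro min_robust_approx_bound_le) auto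
  ultimately show ?thesis
    unfolding nviol_better_of by linarith
qed

theorem mainTheorem9:
  fixes cons :: "'i \<Rightarrow> ('a \<Rightarrow> bool) list"
    and Asg :: "'i \<Rightarrow> 'a set"
    and Poly :: "('i \<Rightarrow> 'a) set"
  assumes fin: "\<And>I. finite (Asg I) \<and> Asg I \<noteq> {}"
    and poly_better: "\<And>A B. A \<in> Poly \<Longrightarrow> B \<in> Poly \<Longrightarrow> better_of cons A B \<in> Poly"
    and ptas: "ptas_max cons Asg Poly"
    and robust: "\<exists>A. super_robust cons Asg Poly A"
  shows "ptas_min cons Asg Poly"
  unfolding ptas_min_def
proof (intro allI impI)
  fix \<tau> :: real assume "0 < \<tau>"
  obtain R K where R: "R \<in> Poly" "\<And>I. R I \<in> Asg I" and "0 \<le> K"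
    and R_bound: "\<And>I \<epsilon>. eps_satisfiable cons Asg I \<epsilon> \<Longrightarrow>
        real (nviol cons I (R I)) \<le> (\<epsilon> + K * \<epsilon>\<^sup>2) * real (ncons cons I)"
    using robust unfolding super_robust_def by blast
  have "0 < \<tau>^2 / (K + 1)" using \<open>0 < \<tau>\<close> \<open>0 \<le> K\<close> by simp
  then obtain B where B: "B \<in> Poly" "\<And>I. B I \<in> Asg I"
    and B_bound: "\<And>I. (1 - \<tau>^2 / (K + 1)) * real (max_opt cons Asg I) \<le> real (nsat cons I (B I))"
    using ptas unfolding ptas_max_def by blast
  have "better_of cons R B I \<in> Asg I \<and>
      real (nviol cons I (better_of cons R B I)) \<le> (1 + \<tau>) * real (min_opt cons Asg I)" for I
  proof
    show "better_of cons R B I \<in> Asg I"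
      using R B unfolding better_of_def by simp
    show "real (nviol cons I (better_of cons R B I)) \<le> (1 + \<tau>) * real (min_opt cons Asg I)"
      by (rule better_of_nviol_le_min_opt)
        (use fin \<open>0 \<le> K\<close> \<open>0 < \<tau>\<close> R_bound B_bound in blast)+
  qed
  then show "\<exists>A\<in>Poly. \<forall>I. A I \<in> Asg I \<and>
      real (nviol cons I (A I)) \<le> (1 + \<tau>) * real (min_opt cons Asg I)"
    using poly_better[OF R(1) B(1)] by blast
qed

end
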